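(* There exists a function $l:\mathbb{N}\to\mathbb{N}$ such that for every $m\in\mathbb{N}$, every graph $G$ and all tuples $\bar a,\bar b$ of vertices of $G$ of the same length: if $\bar a\not\cong_m\bar b$, then $\bar a\not\cong^D_{l(m)}\bar b$.
   Context: Graphs are finite, simple, undirected, loopless, possibly labelled with unary predicates. $N(u)$ is the neighbourhood of $u$ and $D(u,v):=N(u)\,\Delta\,N(v)$. $\bar a\cong_m\bar b$ means Duplicator wins the standard $m$-round Ehrenfeucht–Fraïssé game on $(G,\bar a)$ and $(G,\bar b)$ (equivalently, the tuples satisfy the same FO formulas of quantifier rank $m$). Differential game from $(\bar a,\bar b)$, $\bar a=(a_1,\dots,a_k)$, $\bar b=(b_1,\dots,b_k)$, on a single graph $G$: in each round, with current tuples $(a_1,\dots,a_n),(b_1,\dots,b_n)$, Spoiler chooses $i\le n$ and $v\in D(a_i,b_i)$ and declares whether $v$ becomes $a_{n+1}$ or $b_{n+1}$ (if all $D(a_i,b_i)$ are empty, Duplicator wins); Duplicator answers with a vertex $w\in D(a_i,b_i)$ (same $i$), which becomes the other of $b_{n+1},a_{n+1}$. After the rounds, Duplicator wins iff $a_i\mapsto b_i$ is a label-preserving isomorphism between the induced subgraphs on the $a$'s and $b$'s. $\bar a\cong^D_m\bar b$ means Duplicator has a winning strategy in the $m$-round differential game from $(\bar a,\bar b)$.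
   Formalization: In the differential game, when all $D(a_i,b_i)$ are empty the game stops and Duplicator wins only if $a_i\mapsto b_i$ is a label-preserving isomorphism between the induced subgraphs, instead of winning outright. The statement above fails without it. *)

theory Defs
  imports Main
begin

text \<open>Vertices are natural numbers
  (every finite graph is isomorphic to one of this form); labels are indexed by
  natural numbers: label G p v means that vertex v carries unary predicate p.\<close>

record lgraph =
  verts :: "nat set"
  edge  :: "nat \<Rightarrow> nat \<Rightarrow> bool"
  label :: "nat \<Rightarrow> nat \<Rightarrow> bool"

definition wf_graph :: "lgraph \<Rightarrow> bool" where
  "wf_graph G \<longleftrightarrow> finite (verts G)
     \<and> (\<forall>u v. edge G u v \<longrightarrow> u \<in> verts G \<and> v \<in> verts G)
     \<and> (\<forall>u v. edge G u v \<longrightarrow> edge G v u)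
     \<and> (\<forall>u. \<not> edge G u u)"

definition nbhd :: "lgraph \<Rightarrow> nat \<Rightarrow> nat set" where
  "nbhd G u = {w \<in> verts G. edge G u w}"

definition diffset :: "lgraph \<Rightarrow> nat \<Rightarrow> nat \<Rightarrow> nat set" where
  "diffset G u v = (nbhd G u - nbhd G v) \<union> (nbhd G v - nbhd G u)"

definition partial_iso :: "lgraph \<Rightarrow> nat list \<Rightarrow> nat list \<Rightarrow> bool" where
  "partial_iso G as bs \<longleftrightarrow> length as = length bs
     \<and> (\<forall>i < length as. \<forall>j < length as.
          (as ! i = as ! j \<longleftrightarrow> bs ! i = bs ! j)
          \<and> (edge G (as ! i) (as ! j) \<longleftrightarrow> edge G (bs ! i) (bs ! j)))
     \<and> (\<forall>i < length as. \<forall>p. label G p (as ! i) \<longleftrightarrow> label G p (bs ! i))"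

fun ef_equiv :: "lgraph \<Rightarrow> nat \<Rightarrow> nat list \<Rightarrow> nat list \<Rightarrow> bool" where
  "ef_equiv G 0 as bs = partial_iso G as bs"
| "ef_equiv G (Suc m) as bs =
     ((\<forall>v \<in> verts G. \<exists>w \<in> verts G. ef_equiv G m (as @ [v]) (bs @ [w]))
    \<and> (\<forall>w \<in> verts G. \<exists>v \<in> verts G. ef_equiv G m (as @ [v]) (bs @ [w])))"

text \<open>Duplicator wins the m-round differential game from (as,bs). If all
  difference sets are empty the game stops early and is judged by the final
  isomorphism condition.\<close>
fun diff_equiv :: "lgraph \<Rightarrow> nat \<Rightarrow> nat list \<Rightarrow> nat list \<Rightarrow> bool" where
  "diff_equiv G 0 as bs = partial_iso G as bs"
| "diff_equiv G (Suc m) as bs =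
     (partial_iso G as bs \<and>
      ((\<forall>i < length as. diffset G (as ! i) (bs ! i) = {})
       \<or> (\<forall>i < length as. \<forall>v \<in> diffset G (as ! i) (bs ! i).
            (\<exists>w \<in> diffset G (as ! i) (bs ! i). diff_equiv G m (as @ [v]) (bs @ [w]))
          \<and> (\<exists>w \<in> diffset G (as ! i) (bs ! i). diff_equiv G m (as @ [w]) (bs @ [v])))))"

end

theory Submission imports Defs begin

text \<open>Positions of the differential game are treated as sets \<open>Z\<close> of pairs \<open>(a\<^sub>i, b\<^sub>i)\<close>.
  The core is an extension step: if Duplicator wins \<open>2(M+1)\<close> differential rounds from \<open>Z\<close>,
  then for every vertex \<open>v\<close> there is a \<open>w\<close> such that she wins \<open>M\<close> rounds from \<open>Z \<union> {(v, w)}\<close>;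
  by symmetry the same holds on the \<open>b\<close>-side, so \<open>l(m+1) = 2(l(m)+1)\<close> lets the differential
  game simulate the Ehrenfeucht-Fraisse game round by round.

  For the extension step, suppose first that some position \<open>Z' \<supseteq> Z\<close>, reached in at most \<open>M+1\<close>
  rounds and still won by Duplicator, has \<open>v\<close> in a difference set. Then Spoiler may play \<open>v\<close>
  in \<open>Z'\<close>, and Duplicator's answer \<open>w\<close> also works for \<open>Z\<close>, since winning positions stay winning
  when pairs are removed. Otherwise \<open>v\<close> is never separated, and we pair it with a twin \<open>v'\<close>
  (same neighbourhood and labels) that is not yet used on the \<open>b\<close>-side: \<open>v\<close> itself if possible,
  else an unmatched twin on the \<open>a\<close>-side, which exists by counting, since the pairs of \<open>Z\<close>
  respect the twin class of \<open>v\<close>. The pair \<open>(v, v')\<close> has an empty difference set, so Spoiler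
  can never play from it, and as \<open>v\<close> is never separated it stays consistent with all later pairs.\<close>

lemma edge_sym: "wf_graph G \<Longrightarrow> edge G x y \<longleftrightarrow> edge G y x"
  unfolding wf_graph_def by blast

lemma diffset_iff: "v \<in> diffset G a b \<longleftrightarrow> v \<in> verts G \<and> (edge G a v \<noteq> edge G b v)"
  unfolding diffset_def nbhd_def by blast

lemma diffset_commute: "diffset G a b = diffset G b a"
  unfolding diffset_def by blast

lemma diffset_empty_iff: "diffset G a b = {} \<longleftrightarrow> nbhd G a = nbhd G b"
  unfolding diffset_def by blast

lemma twins_edge:
  assumes "wf_graph G" "nbhd G v = nbhd G v'"
  shows "edge G x v \<longleftrightarrow> edge G x v'"
  using assms unfolding wf_graph_def nbhd_def by blast

lemma twins_diffset:
  assumes "wf_graph G" "nbhd G v = nbhd G v'" "v \<in> verts G" "v' \<in> verts G"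
  shows "v \<in> diffset G a b \<longleftrightarrow> v' \<in> diffset G a b"
  using assms(3,4) by (simp add: diffset_iff twins_edge[OF assms(1,2)])

lemma all_in_set_zip_iff:
  "length xs = length ys \<Longrightarrow>
     (\<forall>a b. (a, b) \<in> set (zip xs ys) \<longrightarrow> P a b) \<longleftrightarrow> (\<forall>i<length xs. P (xs ! i) (ys ! i))"
  by (auto simp: set_zip)

definition pair_iso :: "lgraph \<Rightarrow> (nat \<times> nat) set \<Rightarrow> bool" where
  "pair_iso G Z \<longleftrightarrow> (\<forall>a b a' b'. (a, b) \<in> Z \<longrightarrow> (a', b') \<in> Z \<longrightarrow>
       (a = a' \<longleftrightarrow> b = b') \<and> (edge G a a' \<longleftrightarrow> edge G b b'))
     \<and> (\<forall>a b p. (a, b) \<in> Z \<longrightarrow> (label G p a \<longleftrightarrow> label G p b))"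

lemma partial_iso_iff_pair_iso:
  "partial_iso G xs ys \<longleftrightarrow> length xs = length ys \<and> pair_iso G (set (zip xs ys))"
  by (cases "length xs = length ys") (simp_all add: partial_iso_def pair_iso_def all_in_set_zip_iff)

lemma pair_iso_subset: "pair_iso G Z \<Longrightarrow> Z' \<subseteq> Z \<Longrightarrow> pair_iso G Z'"
  unfolding pair_iso_def by blast

lemma pair_iso_swap: "pair_iso G Z \<Longrightarrow> pair_iso G (prod.swap ` Z)"
  unfolding pair_iso_def by auto

lemma pair_iso_insert:
  assumes "wf_graph G"
  shows "pair_iso G (insert (v, w) Z) \<longleftrightarrow> pair_iso G Z \<and> (\<forall>p. label G p v \<longleftrightarrow> label G p w)
           \<and> (\<forall>a b. (a, b) \<in> Z \<longrightarrow> (a = v \<longleftrightarrow> b = w) \<and> (edge G a v \<longleftrightarrow> edge G b w))"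
proof -
  have "\<not> edge G v v" "\<not> edge G w w"
    using assms unfolding wf_graph_def by blast+
  then show ?thesis
    unfolding pair_iso_def using edge_sym[OF assms]
    by (simp add: imp_disjL all_conj_distrib) blast
qed

lemma pair_iso_insert_twin:
  assumes wf: "wf_graph G" and iso: "pair_iso G Z" and v: "v \<in> verts G"
    and twins: "nbhd G v = nbhd G v'" and labels: "\<forall>p. label G p v \<longleftrightarrow> label G p v'"
    and fresh: "v \<notin> fst ` Z" "v' \<notin> snd ` Z"
    and unseparated: "\<forall>a b. (a, b) \<in> Z \<longrightarrow> v \<notin> diffset G a b"
  shows "pair_iso G (insert (v, v') Z)"
proof -
  have "(a = v \<longleftrightarrow> b = v') \<and> (edge G a v \<longleftrightarrow> edge G b v')" if "(a, b) \<in> Z" for a b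
    using that fresh unseparated v twins_edge[OF wf twins]
    unfolding diffset_iff by force
  then show ?thesis
    using iso labels by (simp add: pair_iso_insert[OF wf])
qed

text \<open>Positions of the differential game as sets of pairs; \<open>\<sigma>\<close> records on which side
  Spoiler places his vertex \<open>u\<close>.\<close>
fun dup_wins :: "lgraph \<Rightarrow> nat \<Rightarrow> (nat \<times> nat) set \<Rightarrow> bool" where
  "dup_wins G 0 Z = pair_iso G Z"
| "dup_wins G (Suc m) Z = (pair_iso G Z \<and>
     (\<forall>a b. (a, b) \<in> Z \<longrightarrow> (\<forall>u\<in>diffset G a b. \<forall>\<sigma>\<in>{id, prod.swap}.
        \<exists>w\<in>diffset G a b. dup_wins G m (insert (\<sigma> (u, w)) Z))))"

lemma dup_wins_Suc_iff:
  "dup_wins G (Suc m) Z \<longleftrightarrow> pair_iso G Z \<and>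
     (\<forall>a b. (a, b) \<in> Z \<longrightarrow> (\<forall>u\<in>diffset G a b.
        (\<exists>w\<in>diffset G a b. dup_wins G m (insert (u, w) Z))
      \<and> (\<exists>w\<in>diffset G a b. dup_wins G m (insert (w, u) Z))))"
  by simp

lemma diff_equiv_iff_dup_wins:
  "length xs = length ys \<Longrightarrow> diff_equiv G m xs ys \<longleftrightarrow> dup_wins G m (set (zip xs ys))"
proof (induction m arbitrary: xs ys)
  case 0
  then show ?case by (simp add: partial_iso_iff_pair_iso)
next
  case (Suc m)
  have IH: "diff_equiv G m (xs @ [u]) (ys @ [w]) \<longleftrightarrow> dup_wins G m (insert (u, w) (set (zip xs ys)))"
    for u w using Suc by simp
  define moves where "moves \<longleftrightarrow> (\<forall>i<length xs. \<forall>u\<in>diffset G (xs ! i) (ys ! i).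
      (\<exists>w\<in>diffset G (xs ! i) (ys ! i). diff_equiv G m (xs @ [u]) (ys @ [w]))
    \<and> (\<exists>w\<in>diffset G (xs ! i) (ys ! i). diff_equiv G m (xs @ [w]) (ys @ [u])))"
  have "(\<forall>i<length xs. diffset G (xs ! i) (ys ! i) = {}) \<Longrightarrow> moves"
    unfolding moves_def by simp
  then have "diff_equiv G (Suc m) xs ys \<longleftrightarrow> partial_iso G xs ys \<and> moves"
    unfolding diff_equiv.simps moves_def[symmetric] by blast
  then show ?case
    unfolding dup_wins_Suc_iff all_in_set_zip_iff[OF Suc.prems] partial_iso_iff_pair_iso
      moves_def IH using Suc.prems by simp
qed

lemma dup_wins_pair_iso: "dup_wins G m Z \<Longrightarrow> pair_iso G Z"
  by (cases m) auto

lemma dup_wins_SucE: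
  assumes "dup_wins G (Suc m) Z" "(a, b) \<in> Z" "u \<in> diffset G a b" "\<sigma> \<in> {id, prod.swap}"
  obtains w where "w \<in> diffset G a b" "dup_wins G m (insert (\<sigma> (u, w)) Z)"
  using assms unfolding dup_wins.simps by blast

lemma dup_wins_SucI:
  assumes "pair_iso G Z"
    and "\<And>a b u \<sigma>. (a, b) \<in> Z \<Longrightarrow> u \<in> diffset G a b \<Longrightarrow> \<sigma> \<in> {id, prod.swap} \<Longrightarrow>
           \<exists>w\<in>diffset G a b. dup_wins G m (insert (\<sigma> (u, w)) Z)"
  shows "dup_wins G (Suc m) Z"
  using assms unfolding dup_wins.simps by blast

declare dup_wins.simps(2) [simp del]

lemma dup_wins_mono: "dup_wins G m Z \<Longrightarrow> Z' \<subseteq> Z \<Longrightarrow> m' \<le> m \<Longrightarrow> dup_wins G m' Z'"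
proof (induction m' arbitrary: m Z Z')
  case 0
  then show ?case using dup_wins_pair_iso pair_iso_subset by (simp; blast)
next
  case (Suc m')
  then obtain k where m: "m = Suc k" "m' \<le> k" by (cases m) auto
  show ?case
  proof (rule dup_wins_SucI)
    show "pair_iso G Z'" using Suc.prems dup_wins_pair_iso pair_iso_subset by blast
  next
    fix a b u and \<sigma> :: "nat \<times> nat \<Rightarrow> nat \<times> nat"
    assume "(a, b) \<in> Z'" "u \<in> diffset G a b" "\<sigma> \<in> {id, prod.swap}"
    then obtain w where "w \<in> diffset G a b" "dup_wins G k (insert (\<sigma> (u, w)) Z)"
      using dup_wins_SucE[of G k Z a b u \<sigma>] Suc.prems m(1) by blast
    moreover have "insert (\<sigma> (u, w)) Z' \<subseteq> insert (\<sigma> (u, w)) Z" using Suc.prems(2) by blast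
    ultimately show "\<exists>w\<in>diffset G a b. dup_wins G m' (insert (\<sigma> (u, w)) Z')"
      using Suc.IH m(2) by blast
  qed
qed

lemma dup_wins_swap: "dup_wins G m Z \<Longrightarrow> dup_wins G m (prod.swap ` Z)"
proof (induction m arbitrary: Z)
  case 0
  then show ?case using pair_iso_swap by simp
next
  case (Suc m)
  show ?case
  proof (rule dup_wins_SucI)
    show "pair_iso G (prod.swap ` Z)" using Suc.prems dup_wins_pair_iso pair_iso_swap by blast
  next
    fix a b u and \<sigma> :: "nat \<times> nat \<Rightarrow> nat \<times> nat"
    assume ab: "(a, b) \<in> prod.swap ` Z" and u: "u \<in> diffset G a b"
      and \<sigma>: "\<sigma> \<in> {id, prod.swap}"
    have "(b, a) \<in> Z" using ab by auto
    moreover have "u \<in> diffset G b a" using u diffset_commute by blast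
    moreover have "prod.swap \<circ> \<sigma> \<in> {id, prod.swap}" using \<sigma> by auto
    ultimately obtain w where w: "w \<in> diffset G b a"
        "dup_wins G m (insert ((prod.swap \<circ> \<sigma>) (u, w)) Z)"
      by (rule dup_wins_SucE[OF Suc.prems])
    have "dup_wins G m (insert (\<sigma> (u, w)) (prod.swap ` Z))"
      using Suc.IH[OF w(2)] by (simp add: image_image)
    then show "\<exists>w\<in>diffset G a b. dup_wins G m (insert (\<sigma> (u, w)) (prod.swap ` Z))"
      using w(1) diffset_commute by blast
  qed
qed

lemma dup_wins_insert_diffset:
  assumes "dup_wins G (Suc m) Z" "(a, b) \<in> Z" "v \<in> diffset G a b"
  shows "\<exists>w\<in>verts G. dup_wins G m (insert (v, w) Z)"
proof -
  obtain w where "w \<in> diffset G a b" "dup_wins G m (insert (id (v, w)) Z)"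
    using dup_wins_SucE[OF assms, of id] by blast
  then show ?thesis using diffset_iff by auto
qed

fun never_separates :: "lgraph \<Rightarrow> nat \<Rightarrow> nat \<Rightarrow> nat \<Rightarrow> (nat \<times> nat) set \<Rightarrow> bool" where
  "never_separates G c v 0 Z \<longleftrightarrow> (\<forall>a b. (a, b) \<in> Z \<longrightarrow> v \<notin> diffset G a b)"
| "never_separates G c v (Suc k) Z \<longleftrightarrow> (\<forall>a b. (a, b) \<in> Z \<longrightarrow> v \<notin> diffset G a b) \<and>
     (\<forall>a b u w. (a, b) \<in> Z \<longrightarrow> u \<in> diffset G a b \<longrightarrow> w \<in> diffset G a b \<longrightarrow>
        dup_wins G (k + c) (insert (u, w) Z) \<longrightarrow> never_separates G c v k (insert (u, w) Z))"

lemma never_separates_diffset: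
  "never_separates G c v k Z \<Longrightarrow> (a, b) \<in> Z \<Longrightarrow> v \<notin> diffset G a b"
  by (cases k) auto

lemma dup_wins_insert_if_separated:
  "\<not> never_separates G (Suc c) v k Z \<Longrightarrow> dup_wins G (k + Suc c) Z \<Longrightarrow>
     \<exists>w\<in>verts G. dup_wins G c (insert (v, w) Z)"
proof (induction k arbitrary: Z)
  case 0
  then obtain a b where "(a, b) \<in> Z" "v \<in> diffset G a b" by auto
  with 0 show ?case using dup_wins_insert_diffset[of G c Z a b v] by simp
next
  case (Suc k)
  have win: "dup_wins G (Suc (k + c)) Z"
    using Suc.prems(2) dup_wins_mono[of G _ Z Z "Suc (k + c)"] by simp
  show ?case
  proof (cases "\<exists>a b. (a, b) \<in> Z \<and> v \<in> diffset G a b")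
    case True
    then obtain a b where "(a, b) \<in> Z" "v \<in> diffset G a b" by blast
    then obtain w where "w \<in> verts G" "dup_wins G (k + c) (insert (v, w) Z)"
      using dup_wins_insert_diffset[OF win] by blast
    then show ?thesis using dup_wins_mono[of G "k + c" "insert (v, w) Z" _ c] by auto
  next
    case False
    then obtain a b u w where "(a, b) \<in> Z" "u \<in> diffset G a b" "w \<in> diffset G a b"
      and "dup_wins G (k + Suc c) (insert (u, w) Z)"
      and "\<not> never_separates G (Suc c) v k (insert (u, w) Z)"
      using Suc.prems(1) by (simp only: never_separates.simps) blast
    then obtain w' where "w' \<in> verts G" "dup_wins G c (insert (v, w') (insert (u, w) Z))"
      using Suc.IH by blast
    then show ?thesis using dup_wins_mono[of G c _ "insert (v, w') Z" c] by blast
  qed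
qed

lemma dup_wins_insert_twin:
  assumes wf: "wf_graph G" and v: "v \<in> verts G" "v' \<in> verts G"
    and twins: "nbhd G v = nbhd G v'" and labels: "\<forall>p. label G p v \<longleftrightarrow> label G p v'"
  shows "never_separates G c v k Z \<Longrightarrow> dup_wins G (k + c) Z \<Longrightarrow> v \<notin> fst ` Z \<Longrightarrow> v' \<notin> snd ` Z \<Longrightarrow>
           dup_wins G k (insert (v, v') Z)"
proof (induction k arbitrary: Z)
  case 0
  then show ?case
    using pair_iso_insert_twin[OF wf _ v(1) twins labels] dup_wins_pair_iso never_separates_diffset
    by simp
next
  case (Suc k)
  show ?case
  proof (rule dup_wins_SucI)
    show "pair_iso G (insert (v, v') Z)"
      using pair_iso_insert_twin[OF wf _ v(1) twins labels] Suc.prems dup_wins_pair_iso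
        never_separates_diffset by blast
  next
    fix a b u and \<sigma> :: "nat \<times> nat \<Rightarrow> nat \<times> nat"
    assume ab: "(a, b) \<in> insert (v, v') Z" and u: "u \<in> diffset G a b" and \<sigma>: "\<sigma> \<in> {id, prod.swap}"
    have "diffset G v v' = {}" using twins diffset_empty_iff by blast
    then have ab: "(a, b) \<in> Z" using ab u by auto
    obtain w where w: "w \<in> diffset G a b" "dup_wins G (k + c) (insert (\<sigma> (u, w)) Z)"
      using dup_wins_SucE[of G "k + c" Z, OF _ ab u \<sigma>] Suc.prems(2) by auto
    obtain x y where xy: "\<sigma> (u, w) = (x, y)" "x \<in> diffset G a b" "y \<in> diffset G a b"
      using \<sigma> u w(1) by auto
    have "v \<notin> diffset G a b" "v' \<notin> diffset G a b"
      using never_separates_diffset[OF Suc.prems(1) ab] twins_diffset[OF wf twins v] by auto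
    then have "v \<notin> fst ` insert (x, y) Z" "v' \<notin> snd ` insert (x, y) Z"
      using Suc.prems(3,4) xy by auto
    moreover have "never_separates G c v k (insert (x, y) Z)"
      using Suc.prems(1) ab xy w(2) by auto
    ultimately have "dup_wins G k (insert (v, v') (insert (x, y) Z))"
      using Suc.IH w(2) xy(1) by simp
    then show "\<exists>w\<in>diffset G a b. dup_wins G k (insert (\<sigma> (u, w)) (insert (v, v') Z))"
      using w(1) xy(1) by (metis insert_commute)
  qed
qed

lemma never_separates_twin_class:
  assumes wf: "wf_graph G" and v: "v \<in> verts G"
    and never: "never_separates G c v (Suc k) Z" and win: "dup_wins G (Suc (k + c)) Z"
    and ab: "(a, b) \<in> Z"
  shows "nbhd G a = nbhd G v \<longleftrightarrow> nbhd G b = nbhd G v"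
proof (rule ccontr)
  assume twin_one: "\<not> (nbhd G a = nbhd G v \<longleftrightarrow> nbhd G b = nbhd G v)"
  then obtain x where x: "x \<in> diffset G a b" using diffset_empty_iff by blast
  obtain w where w: "w \<in> diffset G a b" "dup_wins G (k + c) (insert (id (x, w)) Z)"
    using dup_wins_SucE[OF win ab x, of id] by blast
  have "v \<notin> diffset G x w"
    using never_separates_diffset[of G c v k "insert (x, w) Z"] never ab x w by auto
  then have xw_v: "edge G x v \<longleftrightarrow> edge G w v"
    using v edge_sym[OF wf] unfolding diffset_iff by blast
  have "edge G x a \<longleftrightarrow> edge G w b"
    using dup_wins_pair_iso[OF w(2)] ab unfolding pair_iso_def by auto
  moreover have "\<not> (edge G a x \<longleftrightarrow> edge G b x)" "\<not> (edge G a w \<longleftrightarrow> edge G b w)"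
    using x w(1) unfolding diffset_iff by auto
  ultimately show False
    using twin_one xw_v twins_edge[OF wf] edge_sym[OF wf] by metis
qed

lemma partial_bij_unmatched:
  assumes "finite Z"
    and inj: "\<And>a b a' b'. (a, b) \<in> Z \<Longrightarrow> (a', b') \<in> Z \<Longrightarrow> a = a' \<longleftrightarrow> b = b'"
    and closed: "\<And>a b. (a, b) \<in> Z \<Longrightarrow> a \<in> T \<longleftrightarrow> b \<in> T"
    and v: "v \<in> T" "v \<in> snd ` Z" "v \<notin> fst ` Z"
  shows "\<exists>u\<in>T. u \<in> fst ` Z \<and> u \<notin> snd ` Z"
proof -
  define S where "S = {p \<in> Z. fst p \<in> T}"
  have fst_S: "fst ` S = fst ` Z \<inter> T" and snd_S: "snd ` S = snd ` Z \<inter> T"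
    unfolding S_def using closed by force+
  have "inj_on fst S" "inj_on snd S"
    unfolding S_def inj_on_def using inj by auto
  then have "card (fst ` S) = card (snd ` S)"
    by (simp add: card_image)
  moreover have "finite (snd ` S)"
    unfolding S_def using \<open>finite Z\<close> by simp
  moreover have "v \<in> snd ` S" "v \<notin> fst ` S"
    using v fst_S snd_S by blast+
  ultimately obtain u where "u \<in> fst ` S" "u \<notin> snd ` S"
    using card_subset_eq[of "snd ` S" "fst ` S"] by blast
  then show ?thesis
    unfolding fst_S snd_S by blast
qed

lemma never_separates_fresh_twin:
  assumes wf: "wf_graph G" and "finite Z" and fst_Z: "fst ` Z \<subseteq> verts G" and v: "v \<in> verts G"
    and never: "never_separates G c v (Suc k) Z" and win: "dup_wins G (Suc (k + c)) Z"
    and unmatched: "v \<notin> fst ` Z"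
  shows "\<exists>v'\<in>verts G. v' \<notin> snd ` Z \<and> nbhd G v = nbhd G v' \<and> (\<forall>p. label G p v \<longleftrightarrow> label G p v')"
proof (cases "v \<in> snd ` Z")
  case False
  then show ?thesis using v by blast
next
  case True
  let ?T = "{u. nbhd G u = nbhd G v \<and> (\<forall>p. label G p u \<longleftrightarrow> label G p v)}"
  have iso: "pair_iso G Z" using dup_wins_pair_iso[OF win] .
  have inj: "a = a' \<longleftrightarrow> b = b'" if "(a, b) \<in> Z" "(a', b') \<in> Z" for a b a' b'
    using iso that unfolding pair_iso_def by blast
  have closed: "a \<in> ?T \<longleftrightarrow> b \<in> ?T" if "(a, b) \<in> Z" for a b
    using never_separates_twin_class[OF wf v never win that] iso that
    unfolding pair_iso_def by simp
  obtain u where "u \<in> ?T" "u \<in> fst ` Z" "u \<notin> snd ` Z"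
    using partial_bij_unmatched[OF \<open>finite Z\<close> inj closed _ True unmatched] by blast
  then show ?thesis using fst_Z by (intro bexI[of _ u]) auto
qed

lemma dup_wins_extend:
  assumes wf: "wf_graph G" and "finite Z"
    and fst_Z: "fst ` Z \<subseteq> verts G" and snd_Z: "snd ` Z \<subseteq> verts G"
    and win: "dup_wins G (2 * Suc M) Z" and v: "v \<in> verts G"
  shows "\<exists>w\<in>verts G. dup_wins G M (insert (v, w) Z)"
proof -
  consider (matched) "v \<in> fst ` Z" | (separated) "\<not> never_separates G (Suc M) v (Suc M) Z"
    | (fresh) "v \<notin> fst ` Z" "never_separates G (Suc M) v (Suc M) Z"
    by blast
  then show ?thesis
  proof cases
    case matched
    then obtain b where b: "(v, b) \<in> Z" by force
    then have "dup_wins G M (insert (v, b) Z)"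
      using dup_wins_mono[OF win, of Z M] by (simp add: insert_absorb)
    moreover have "b \<in> verts G" using snd_Z b by force
    ultimately show ?thesis by blast
  next
    case separated
    then show ?thesis using dup_wins_insert_if_separated win[unfolded mult_2] by blast
  next
    case fresh
    have "dup_wins G (Suc (M + Suc M)) Z" using win by (simp add: mult_2)
    then obtain v' where "v' \<in> verts G" "v' \<notin> snd ` Z" "nbhd G v = nbhd G v'"
      "\<forall>p. label G p v \<longleftrightarrow> label G p v'"
      using never_separates_fresh_twin[OF wf \<open>finite Z\<close> fst_Z v fresh(2)] fresh(1) by blast
    then have "dup_wins G (Suc M) (insert (v, v') Z)"
      using dup_wins_insert_twin[OF wf v _ _ _ fresh(2) win[unfolded mult_2] fresh(1)] by blast
    then show ?thesis
      using \<open>v' \<in> verts G\<close> dup_wins_mono[of G "Suc M" _ _ M] by auto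
  qed
qed

fun diff_rounds :: "nat \<Rightarrow> nat" where
  "diff_rounds 0 = 0"
| "diff_rounds (Suc m) = 2 * Suc (diff_rounds m)"

lemma ef_equiv_if_dup_wins:
  assumes wf: "wf_graph G"
  shows "length xs = length ys \<Longrightarrow> set xs \<subseteq> verts G \<Longrightarrow> set ys \<subseteq> verts G \<Longrightarrow>
           dup_wins G (diff_rounds m) (set (zip xs ys)) \<Longrightarrow> ef_equiv G m xs ys"
proof (induction m arbitrary: xs ys)
  case 0
  then show ?case by (simp add: partial_iso_iff_pair_iso)
next
  case (Suc m)
  let ?Z = "set (zip xs ys)"
  have fst_Z: "fst ` ?Z \<subseteq> verts G" and snd_Z: "snd ` ?Z \<subseteq> verts G"
    using Suc.prems(2,3) by (auto dest: set_zip_leftD set_zip_rightD)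
  have win: "dup_wins G (2 * Suc (diff_rounds m)) ?Z"
    using Suc.prems(4) by simp
  have extend: "ef_equiv G m (xs @ [v]) (ys @ [w])"
    if "v \<in> verts G" "w \<in> verts G" "dup_wins G (diff_rounds m) (insert (v, w) ?Z)" for v w
    using Suc.IH[of "xs @ [v]" "ys @ [w]"] Suc.prems that by simp
  have "\<exists>w\<in>verts G. ef_equiv G m (xs @ [v]) (ys @ [w])" if v: "v \<in> verts G" for v
    using dup_wins_extend[OF wf finite_set fst_Z snd_Z win v] extend v by blast
  moreover have "\<exists>v\<in>verts G. ef_equiv G m (xs @ [v]) (ys @ [w])" if w: "w \<in> verts G" for w
  proof -
    have "fst ` prod.swap ` ?Z \<subseteq> verts G" "snd ` prod.swap ` ?Z \<subseteq> verts G"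
      using fst_Z snd_Z by (auto simp: image_image)
    from dup_wins_extend[OF wf finite_imageI[OF finite_set] this dup_wins_swap[OF win] w]
    obtain v where v: "v \<in> verts G" "dup_wins G (diff_rounds m) (insert (w, v) (prod.swap ` ?Z))"
      by blast
    have "prod.swap ` insert (w, v) (prod.swap ` ?Z) = insert (v, w) ?Z"
      by (simp add: image_image)
    then have "dup_wins G (diff_rounds m) (insert (v, w) ?Z)"
      using dup_wins_swap[OF v(2)] by simp
    moreover note v(1)
    ultimately show ?thesis using extend w by blast
  qed
  ultimately show ?case by simp
qed

theorem lemma6p3:
  shows "\<exists>l :: nat \<Rightarrow> nat. \<forall>m G as bs.
           wf_graph G \<and> set as \<subseteq> verts G \<and> set bs \<subseteq> verts G \<and> length as = length bs
           \<and> \<not> ef_equiv G m as bs \<longrightarrow> \<not> diff_equiv G (l m) as bs"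
proof (intro exI[of _ diff_rounds] allI impI)
  fix m G as bs
  assume "wf_graph G \<and> set as \<subseteq> verts G \<and> set bs \<subseteq> verts G \<and> length as = length bs
    \<and> \<not> ef_equiv G m as bs"
  then show "\<not> diff_equiv G (diff_rounds m) as bs"
    using ef_equiv_if_dup_wins diff_equiv_iff_dup_wins by blast
qed

end
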